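(* Let $R$ be a ring. If the factor ring $R/J(R)$ is NJ-symmetric, then $R$ is NJ-symmetric.
   Context: Rings are associative with identity. $N(R)$ is the set of nilpotent elements, $J(R)$ the Jacobson radical. $R$ is NJ-symmetric if for all $a,b,c\in R$, $abc\in N(R)$ implies $bac\in J(R)$. *)

theory Defs
  imports "HOL-Algebra.QuotRing"
begin

definition left_ideal :: "('a, 'b) ring_scheme \<Rightarrow> 'a set \<Rightarrow> bool" where
  "left_ideal R I \<longleftrightarrow> subgroup I (add_monoid R) \<and>
     (\<forall>a \<in> carrier R. \<forall>x \<in> I. a \<otimes>\<^bsub>R\<^esub> x \<in> I)"

definition maximal_left_ideal :: "('a, 'b) ring_scheme \<Rightarrow> 'a set \<Rightarrow> bool" where
  "maximal_left_ideal R I \<longleftrightarrow> left_ideal R I \<and> I \<noteq> carrier R \<and>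
     (\<forall>K. left_ideal R K \<and> I \<subseteq> K \<and> K \<noteq> carrier R \<longrightarrow> K = I)"

text \<open>Jacobson radical: intersection of all maximal left ideals
  (the whole ring if there are none, i.e. for the zero ring).\<close>
definition jacobson :: "('a, 'b) ring_scheme \<Rightarrow> 'a set" where
  "jacobson R = carrier R \<inter> \<Inter> {I. maximal_left_ideal R I}"

definition nilpotents :: "('a, 'b) ring_scheme \<Rightarrow> 'a set" where
  "nilpotents R = {a \<in> carrier R. \<exists>n::nat. a [^]\<^bsub>R\<^esub> n = \<zero>\<^bsub>R\<^esub>}"

definition NJ_symmetric :: "('a, 'b) ring_scheme \<Rightarrow> bool" where
  "NJ_symmetric R \<longleftrightarrow> (\<forall>a \<in> carrier R. \<forall>b \<in> carrier R. \<forall>c \<in> carrier R.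
     a \<otimes>\<^bsub>R\<^esub> b \<otimes>\<^bsub>R\<^esub> c \<in> nilpotents R \<longrightarrow>
     b \<otimes>\<^bsub>R\<^esub> a \<otimes>\<^bsub>R\<^esub> c \<in> jacobson R)"

end

theory Submission
  imports Defs
begin

text \<open>A left ideal \<open>M\<close> is maximal iff \<open>\<one> \<notin> M\<close> and every \<open>x \<notin> M\<close> has some \<open>s\<close>
  with \<open>\<one> - s x \<in> M\<close>. With this criterion the colon \<open>{s. s r \<in> M}\<close> of a maximal left
  ideal by \<open>r \<notin> M\<close> is again maximal, which makes \<open>J(R)\<close> a two-sided ideal; and the image
  of a maximal left ideal under a surjective ring homomorphism whose kernel it contains is
  maximal. Hence an element of \<open>R\<close> whose image lies in \<open>J(R/J(R))\<close> lies in \<open>J(R)\<close>. Since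
  nilpotency passes to the quotient, NJ-symmetry of \<open>R/J(R)\<close> pulls back to \<open>R\<close>.\<close>

lemma maximal_left_ideal_imp_left_ideal: "maximal_left_ideal R M \<Longrightarrow> left_ideal R M"
  unfolding maximal_left_ideal_def by blast

lemma in_jacobson_iff:
  "x \<in> jacobson R \<longleftrightarrow> x \<in> carrier R \<and> (\<forall>M. maximal_left_ideal R M \<longrightarrow> x \<in> M)"
  unfolding jacobson_def by blast

context ring
begin

lemma left_idealI:
  assumes "I \<subseteq> carrier R" and "\<zero> \<in> I"
    and "\<And>x y. x \<in> I \<Longrightarrow> y \<in> I \<Longrightarrow> x \<oplus> y \<in> I"
    and "\<And>x. x \<in> I \<Longrightarrow> \<ominus> x \<in> I"
    and "\<And>a x. a \<in> carrier R \<Longrightarrow> x \<in> I \<Longrightarrow> a \<otimes> x \<in> I"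
  shows "left_ideal R I"
  using assms unfolding left_ideal_def subgroup_def a_inv_def by auto

lemma
  assumes "left_ideal R I"
  shows left_ideal_subset: "I \<subseteq> carrier R"
    and left_ideal_zero: "\<zero> \<in> I"
    and left_ideal_add: "x \<in> I \<Longrightarrow> y \<in> I \<Longrightarrow> x \<oplus> y \<in> I"
    and left_ideal_a_inv: "x \<in> I \<Longrightarrow> \<ominus> x \<in> I"
    and left_ideal_mult: "a \<in> carrier R \<Longrightarrow> x \<in> I \<Longrightarrow> a \<otimes> x \<in> I"
  using assms unfolding left_ideal_def subgroup_def a_inv_def by auto

lemma left_ideal_one_imp_carrier:
  assumes "left_ideal R I" and "\<one> \<in> I"
  shows "I = carrier R"
  using assms left_ideal_subset left_ideal_mult[OF assms(1) _ assms(2)] by fastforce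

lemma left_ideal_principal_add:
  assumes M: "left_ideal R M" and x: "x \<in> carrier R"
  shows "left_ideal R {s \<otimes> x \<oplus> m | s m. s \<in> carrier R \<and> m \<in> M}"
    (is "left_ideal R ?N")
proof (rule left_idealI)
  note Mc = left_ideal_subset[OF M]
  show "?N \<subseteq> carrier R"
    using x Mc by auto
  have "\<zero> = \<zero> \<otimes> x \<oplus> \<zero>"
    using x by simp
  then show "\<zero> \<in> ?N"
    using left_ideal_zero[OF M] by blast
  show "u \<oplus> v \<in> ?N" if uv: "u \<in> ?N" "v \<in> ?N" for u v
  proof -
    obtain s m t n where "u = s \<otimes> x \<oplus> m" "v = t \<otimes> x \<oplus> n"
      and st: "s \<in> carrier R" "t \<in> carrier R" and mn: "m \<in> M" "n \<in> M"
      using uv by blast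
    moreover have "m \<in> carrier R" "n \<in> carrier R"
      using mn Mc by auto
    ultimately have "u \<oplus> v = (s \<oplus> t) \<otimes> x \<oplus> (m \<oplus> n)"
      using x by (simp add: l_distr a_ac)
    then show ?thesis
      using st mn left_ideal_add[OF M] by blast
  qed
  show "\<ominus> u \<in> ?N" if u: "u \<in> ?N" for u
  proof -
    obtain s m where "u = s \<otimes> x \<oplus> m" and s: "s \<in> carrier R" and m: "m \<in> M"
      using u by blast
    moreover have "m \<in> carrier R"
      using m Mc by auto
    ultimately have "\<ominus> u = (\<ominus> s) \<otimes> x \<oplus> \<ominus> m"
      using x by (simp add: l_minus minus_add)
    then show ?thesis
      using s m left_ideal_a_inv[OF M] by blast
  qed
  show "a \<otimes> u \<in> ?N" if a: "a \<in> carrier R" and u: "u \<in> ?N" for a u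
  proof -
    obtain s m where "u = s \<otimes> x \<oplus> m" and s: "s \<in> carrier R" and m: "m \<in> M"
      using u by blast
    moreover have "m \<in> carrier R"
      using m Mc by auto
    ultimately have "a \<otimes> u = (a \<otimes> s) \<otimes> x \<oplus> a \<otimes> m"
      using a x by (simp add: r_distr m_assoc)
    then show ?thesis
      using a s m left_ideal_mult[OF M] by blast
  qed
qed

lemma maximal_left_ideal_left_inverse_mod:
  assumes max: "maximal_left_ideal R M" and x: "x \<in> carrier R" "x \<notin> M"
  shows "\<exists>s \<in> carrier R. \<one> \<ominus> s \<otimes> x \<in> M"
proof -
  let ?N = "{s \<otimes> x \<oplus> m | s m. s \<in> carrier R \<and> m \<in> M}"
  have M: "left_ideal R M"
    using maximal_left_ideal_imp_left_ideal[OF max] .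
  have "M \<subseteq> ?N"
  proof
    fix m assume "m \<in> M"
    moreover have "m = \<zero> \<otimes> x \<oplus> m"
      using calculation x left_ideal_subset[OF M] by auto
    ultimately show "m \<in> ?N"
      by blast
  qed
  moreover have "x = \<one> \<otimes> x \<oplus> \<zero>"
    using x by simp
  then have "x \<in> ?N"
    using left_ideal_zero[OF M] by blast
  ultimately have "?N = carrier R"
    using max left_ideal_principal_add[OF M x(1)] x(2) unfolding maximal_left_ideal_def by blast
  then have "\<one> \<in> ?N"
    by simp
  then obtain s m where s: "s \<in> carrier R" and m: "m \<in> M" and one: "\<one> = s \<otimes> x \<oplus> m"
    by blast
  have "m \<in> carrier R"
    using m left_ideal_subset[OF M] by blast
  then have "\<one> \<ominus> s \<otimes> x = m"
    using s x one by (simp add: ring_simprules)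
  then show ?thesis
    using s m by auto
qed

lemma maximal_left_ideal_iff:
  "maximal_left_ideal R M \<longleftrightarrow>
     left_ideal R M \<and> \<one> \<notin> M \<and> (\<forall>x \<in> carrier R - M. \<exists>s \<in> carrier R. \<one> \<ominus> s \<otimes> x \<in> M)"
proof
  assume max: "maximal_left_ideal R M"
  then have "left_ideal R M" and "M \<noteq> carrier R"
    unfolding maximal_left_ideal_def by auto
  then show "left_ideal R M \<and> \<one> \<notin> M \<and> (\<forall>x \<in> carrier R - M. \<exists>s \<in> carrier R. \<one> \<ominus> s \<otimes> x \<in> M)"
    using left_ideal_one_imp_carrier maximal_left_ideal_left_inverse_mod[OF max] by blast
next
  assume M: "left_ideal R M \<and> \<one> \<notin> M \<and> (\<forall>x \<in> carrier R - M. \<exists>s \<in> carrier R. \<one> \<ominus> s \<otimes> x \<in> M)"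
  have "K = M" if K: "left_ideal R K" "M \<subseteq> K" "K \<noteq> carrier R" for K
  proof (rule ccontr)
    assume "K \<noteq> M"
    then obtain x where x: "x \<in> K" "x \<notin> M"
      using K(2) by blast
    then have xc: "x \<in> carrier R"
      using left_ideal_subset[OF K(1)] by blast
    then obtain s where s: "s \<in> carrier R" and "\<one> \<ominus> s \<otimes> x \<in> K"
      using M x K(2) by blast
    then have "(\<one> \<ominus> s \<otimes> x) \<oplus> s \<otimes> x \<in> K"
      using K(1) x left_ideal_add left_ideal_mult by blast
    moreover have "(\<one> \<ominus> s \<otimes> x) \<oplus> s \<otimes> x = \<one>"
      using s xc by (simp add: ring_simprules)
    ultimately show False
      using K left_ideal_one_imp_carrier by auto
  qed
  then show "maximal_left_ideal R M"
    using M unfolding maximal_left_ideal_def by blast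
qed

lemma left_ideal_colon:
  assumes M: "left_ideal R M" and r: "r \<in> carrier R"
  shows "left_ideal R {s \<in> carrier R. s \<otimes> r \<in> M}"
proof (rule left_idealI)
  show "{s \<in> carrier R. s \<otimes> r \<in> M} \<subseteq> carrier R"
    by blast
  show "\<zero> \<in> {s \<in> carrier R. s \<otimes> r \<in> M}"
    using r left_ideal_zero[OF M] by simp
  show "x \<oplus> y \<in> {s \<in> carrier R. s \<otimes> r \<in> M}"
    if "x \<in> {s \<in> carrier R. s \<otimes> r \<in> M}" "y \<in> {s \<in> carrier R. s \<otimes> r \<in> M}" for x y
    using that r left_ideal_add[OF M] by (simp add: l_distr)
  show "\<ominus> x \<in> {s \<in> carrier R. s \<otimes> r \<in> M}" if "x \<in> {s \<in> carrier R. s \<otimes> r \<in> M}" for x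
    using that r left_ideal_a_inv[OF M] by (simp add: l_minus)
  show "a \<otimes> x \<in> {s \<in> carrier R. s \<otimes> r \<in> M}"
    if "a \<in> carrier R" "x \<in> {s \<in> carrier R. s \<otimes> r \<in> M}" for a x
    using that r left_ideal_mult[OF M] by (simp add: m_assoc)
qed

lemma maximal_left_ideal_colon:
  assumes M: "maximal_left_ideal R M" and r: "r \<in> carrier R" "r \<notin> M"
  shows "maximal_left_ideal R {s \<in> carrier R. s \<otimes> r \<in> M}"
  unfolding maximal_left_ideal_iff
proof (intro conjI ballI)
  have M_ideal: "left_ideal R M"
    using maximal_left_ideal_imp_left_ideal[OF M] .
  show "left_ideal R {s \<in> carrier R. s \<otimes> r \<in> M}"
    using left_ideal_colon[OF M_ideal r(1)] .
  show "\<one> \<notin> {s \<in> carrier R. s \<otimes> r \<in> M}"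
    using r by simp
  fix t assume "t \<in> carrier R - {s \<in> carrier R. s \<otimes> r \<in> M}"
  then have t: "t \<in> carrier R" and "t \<otimes> r \<in> carrier R - M"
    using r by auto
  then obtain s where s: "s \<in> carrier R" and "\<one> \<ominus> s \<otimes> (t \<otimes> r) \<in> M"
    using M unfolding maximal_left_ideal_iff by blast
  then have "r \<otimes> (\<one> \<ominus> s \<otimes> (t \<otimes> r)) \<in> M"
    using M_ideal r left_ideal_mult by blast
  moreover have "(\<one> \<ominus> r \<otimes> s \<otimes> t) \<otimes> r = r \<otimes> (\<one> \<ominus> s \<otimes> (t \<otimes> r))"
    using r s t by (simp add: ring_simprules)
  ultimately show "\<exists>s' \<in> carrier R. \<one> \<ominus> s' \<otimes> t \<in> {s \<in> carrier R. s \<otimes> r \<in> M}"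
    using r s t by (intro bexI[of _ "r \<otimes> s"]) auto
qed

lemma left_ideal_jacobson: "left_ideal R (jacobson R)"
proof (rule left_idealI)
  note M_ideal = maximal_left_ideal_imp_left_ideal[of R]
  show "jacobson R \<subseteq> carrier R"
    unfolding jacobson_def by blast
  show "\<zero> \<in> jacobson R"
    using M_ideal left_ideal_zero by (simp add: in_jacobson_iff)
  show "x \<oplus> y \<in> jacobson R" if "x \<in> jacobson R" "y \<in> jacobson R" for x y
    using that M_ideal left_ideal_add by (simp add: in_jacobson_iff)
  show "\<ominus> x \<in> jacobson R" if "x \<in> jacobson R" for x
    using that M_ideal left_ideal_a_inv by (simp add: in_jacobson_iff)
  show "a \<otimes> x \<in> jacobson R" if "a \<in> carrier R" "x \<in> jacobson R" for a x
    using that M_ideal left_ideal_mult by (simp add: in_jacobson_iff)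
qed

lemma ideal_jacobson: "ideal (jacobson R) R"
proof (rule idealI)
  show "ring R" ..
  show "subgroup (jacobson R) (add_monoid R)"
    using left_ideal_jacobson unfolding left_ideal_def by blast
  show "x \<otimes> a \<in> jacobson R" if "a \<in> jacobson R" "x \<in> carrier R" for a x
    using that left_ideal_jacobson left_ideal_mult by blast
  show "a \<otimes> x \<in> jacobson R" if a: "a \<in> jacobson R" and x: "x \<in> carrier R" for a x
    unfolding in_jacobson_iff
  proof (intro conjI allI impI)
    have a_carrier: "a \<in> carrier R"
      using a unfolding in_jacobson_iff by blast
    then show "a \<otimes> x \<in> carrier R"
      using x by simp
    fix M assume M: "maximal_left_ideal R M"
    show "a \<otimes> x \<in> M"
    proof (cases "x \<in> M")
      case True
      then show ?thesis
        using a_carrier left_ideal_mult maximal_left_ideal_imp_left_ideal[OF M] by blast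
    next
      case False
      then have "a \<in> {s \<in> carrier R. s \<otimes> x \<in> M}"
        using a maximal_left_ideal_colon[OF M x] unfolding in_jacobson_iff by blast
      then show ?thesis
        by simp
    qed
  qed
qed

end

context ring_hom_ring
begin

lemma left_ideal_image:
  assumes surj: "h ` carrier R = carrier S" and I: "left_ideal R I"
  shows "left_ideal S (h ` I)"
proof (rule S.left_idealI)
  have Ic: "I \<subseteq> carrier R"
    using R.left_ideal_subset[OF I] .
  show "h ` I \<subseteq> carrier S"
    using Ic by auto
  show "\<zero>\<^bsub>S\<^esub> \<in> h ` I"
    using R.left_ideal_zero[OF I] hom_zero by (metis image_eqI)
  show "u \<oplus>\<^bsub>S\<^esub> v \<in> h ` I" if uv: "u \<in> h ` I" "v \<in> h ` I" for u v
  proof -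
    obtain x y where "x \<in> I" "y \<in> I" "u = h x" "v = h y"
      using uv by blast
    moreover have "h x \<oplus>\<^bsub>S\<^esub> h y = h (x \<oplus> y)"
      using calculation Ic by (simp add: subsetD)
    ultimately show ?thesis
      using R.left_ideal_add[OF I] by auto
  qed
  show "\<ominus>\<^bsub>S\<^esub> u \<in> h ` I" if u: "u \<in> h ` I" for u
  proof -
    obtain x where "x \<in> I" "u = h x"
      using u by blast
    moreover have "\<ominus>\<^bsub>S\<^esub> h x = h (\<ominus> x)"
      using calculation Ic by (simp add: subsetD)
    ultimately show ?thesis
      using R.left_ideal_a_inv[OF I] by auto
  qed
  show "b \<otimes>\<^bsub>S\<^esub> u \<in> h ` I" if b: "b \<in> carrier S" and u: "u \<in> h ` I" for b u
  proof -
    obtain a x where "a \<in> carrier R" "x \<in> I" "b = h a" "u = h x"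
      using b u surj by blast
    moreover have "h a \<otimes>\<^bsub>S\<^esub> h x = h (a \<otimes> x)"
      using calculation Ic by (simp add: subsetD)
    ultimately show ?thesis
      using R.left_ideal_mult[OF I] by auto
  qed
qed

lemma left_ideal_image_mem_iff:
  assumes I: "left_ideal R I" and ker: "a_kernel R S h \<subseteq> I" and x: "x \<in> carrier R"
  shows "h x \<in> h ` I \<longleftrightarrow> x \<in> I"
proof
  assume "h x \<in> h ` I"
  then obtain y where y: "y \<in> I" "h x = h y"
    by blast
  have yc: "y \<in> carrier R"
    using y R.left_ideal_subset[OF I] by blast
  have "h (x \<ominus> y) = \<zero>\<^bsub>S\<^esub>"
    using x yc y(2) by (simp add: R.minus_eq S.minus_eq S.r_neg)
  then have "x \<ominus> y \<in> I"
    using ker x yc unfolding a_kernel_def' by auto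
  then have "(x \<ominus> y) \<oplus> y \<in> I"
    using I y(1) R.left_ideal_add by blast
  moreover have "(x \<ominus> y) \<oplus> y = x"
    using x yc by (simp add: R.ring_simprules)
  ultimately show "x \<in> I"
    by simp
qed blast

lemma maximal_left_ideal_image:
  assumes surj: "h ` carrier R = carrier S"
    and M: "maximal_left_ideal R M" and ker: "a_kernel R S h \<subseteq> M"
  shows "maximal_left_ideal S (h ` M)"
  unfolding S.maximal_left_ideal_iff
proof (intro conjI ballI)
  have M_ideal: "left_ideal R M" and one: "\<one> \<notin> M"
    and inv: "\<forall>x \<in> carrier R - M. \<exists>s \<in> carrier R. \<one> \<ominus> s \<otimes> x \<in> M"
    using M unfolding R.maximal_left_ideal_iff by auto
  show "left_ideal S (h ` M)"
    using left_ideal_image[OF surj M_ideal] .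
  show "\<one>\<^bsub>S\<^esub> \<notin> h ` M"
    using one left_ideal_image_mem_iff[OF M_ideal ker R.one_closed] by simp
  fix y assume y: "y \<in> carrier S - h ` M"
  then obtain x where x: "x \<in> carrier R" "y = h x"
    using surj by blast
  with y obtain s where s: "s \<in> carrier R" and sx: "\<one> \<ominus> s \<otimes> x \<in> M"
    using inv by blast
  have "h (\<one> \<ominus> s \<otimes> x) = \<one>\<^bsub>S\<^esub> \<ominus>\<^bsub>S\<^esub> h s \<otimes>\<^bsub>S\<^esub> y"
    using s x by (simp add: R.minus_eq S.minus_eq)
  then show "\<exists>s \<in> carrier S. \<one>\<^bsub>S\<^esub> \<ominus>\<^bsub>S\<^esub> s \<otimes>\<^bsub>S\<^esub> y \<in> h ` M"
    using s sx by (metis hom_closed image_eqI)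
qed

lemma jacobson_vimage_subset:
  assumes surj: "h ` carrier R = carrier S" and ker: "a_kernel R S h \<subseteq> jacobson R"
  shows "{x \<in> carrier R. h x \<in> jacobson S} \<subseteq> jacobson R"
proof
  fix x assume x: "x \<in> {x \<in> carrier R. h x \<in> jacobson S}"
  have "x \<in> M" if M: "maximal_left_ideal R M" for M
  proof -
    have ker_M: "a_kernel R S h \<subseteq> M"
      using ker M unfolding jacobson_def by blast
    have "h x \<in> h ` M"
      using x maximal_left_ideal_image[OF surj M ker_M] unfolding in_jacobson_iff by blast
    then show "x \<in> M"
      using left_ideal_image_mem_iff[OF maximal_left_ideal_imp_left_ideal[OF M] ker_M] x by blast
  qed
  then show "x \<in> jacobson R"
    using x unfolding in_jacobson_iff by blast
qed

lemma hom_nilpotents: "x \<in> nilpotents R \<Longrightarrow> h x \<in> nilpotents S"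
proof -
  assume "x \<in> nilpotents R"
  then obtain n :: nat where x: "x \<in> carrier R" and n: "x [^] n = \<zero>"
    unfolding nilpotents_def by blast
  have "h x [^]\<^bsub>S\<^esub> n = h (x [^] n)"
    using x by (simp add: hom_nat_pow)
  with n have "h x [^]\<^bsub>S\<^esub> n = \<zero>\<^bsub>S\<^esub>"
    by simp
  then show "h x \<in> nilpotents S"
    using x unfolding nilpotents_def by auto
qed

lemma NJ_symmetric_lift:
  assumes surj: "h ` carrier R = carrier S" and ker: "a_kernel R S h \<subseteq> jacobson R"
    and NJ: "NJ_symmetric S"
  shows "NJ_symmetric R"
  unfolding NJ_symmetric_def
proof (intro ballI impI)
  fix a b c assume a: "a \<in> carrier R" and b: "b \<in> carrier R" and c: "c \<in> carrier R"
    and nil: "a \<otimes> b \<otimes> c \<in> nilpotents R"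
  have "h a \<otimes>\<^bsub>S\<^esub> h b \<otimes>\<^bsub>S\<^esub> h c \<in> nilpotents S"
    using hom_nilpotents[OF nil] a b c by simp
  then have "h b \<otimes>\<^bsub>S\<^esub> h a \<otimes>\<^bsub>S\<^esub> h c \<in> jacobson S"
    using NJ hom_closed[OF a] hom_closed[OF b] hom_closed[OF c] unfolding NJ_symmetric_def by blast
  then have "b \<otimes> a \<otimes> c \<in> {x \<in> carrier R. h x \<in> jacobson S}"
    using a b c by simp
  then show "b \<otimes> a \<otimes> c \<in> jacobson R"
    using jacobson_vimage_subset[OF surj ker] by blast
qed

end

lemma (in ideal) rcos_image_carrier: "(+>) I ` carrier R = carrier (R Quot I)"
proof -
  have "carrier (R Quot I) = a_rcosets I"
    unfolding FactRing_def by (simp only: partial_object.simps)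
  then show ?thesis
    unfolding A_RCOSETS_def' by blast
qed

lemma (in ideal) a_kernel_rcos: "a_kernel R (R Quot I) ((+>) I) = I"
proof -
  have zero: "\<zero>\<^bsub>R Quot I\<^esub> = I"
    unfolding FactRing_def by (simp only: ring.simps)
  show ?thesis
    unfolding a_kernel_def' zero
    using rcos_const_imp_mem a_rcos_zero[OF is_ideal] Icarr by blast
qed

theorem theorem2p14:
  fixes R :: "('a, 'b) ring_scheme"
  assumes "ring R"
    and "NJ_symmetric (R Quot (jacobson R))"
  shows "NJ_symmetric R"
proof -
  interpret ring R by fact
  interpret J: ideal "jacobson R" R
    using ideal_jacobson .
  interpret ring_hom_ring R "R Quot jacobson R" "a_r_coset R (jacobson R)"
    using J.rcos_ring_hom_ring .
  show ?thesis
    using NJ_symmetric_lift[OF J.rcos_image_carrier _ assms(2)] J.a_kernel_rcos by blast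
qed

end
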